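(* Let $\alpha>0$, $\alpha\neq1$. For every unitary $U\in\mathcal{U}(d)$, $H_\alpha(U)=0$ if and only if $U$ belongs to the Clifford group $\mathcal{C}_n(d_L)$.
   Context: Let $d_L\ge 2$, $n\ge1$, $d=d_L^n$. On $\mathbb{C}^{d_L}$ with computational basis $\{|k\rangle\}_{k\in\mathbb{Z}_{d_L}}$, let $Z|k\rangle=\omega^k|k\rangle$, $X|k\rangle=|k+1\rangle$ (mod $d_L$), $\omega=e^{2\pi i/d_L}$, $\tau=-e^{i\pi/d_L}$, $D_{(a_1,a_2)}=\tau^{a_1a_2}X^{a_1}Z^{a_2}$, and for $\mathbf a=\mathbf a_1\oplus\cdots\oplus\mathbf a_n\in\mathbb{Z}_{d_L}^{2n}$ let $D_{\mathbf a}=D_{\mathbf a_1}\otimes\cdots\otimes D_{\mathbf a_n}$ acting on $\mathbb{C}^d$. The Clifford group $\mathcal{C}_n(d_L)$ is the set of unitaries $C$ on $\mathbb{C}^d$ such that for every $\mathbf a$ there exist $s\in\mathbb{Z}_{d_L}$ and $\mathbf a'$ with $CD_{\mathbf a}C^\dagger=\omega^sD_{\mathbf a'}$. For a unitary $U$ let $\mathfrak{C}_{\mathbf{ab}}(U)=\frac1d\operatorname{tr}(D_{\mathbf a}^\dagger UD_{\mathbf b}U^\dagger)$, $\mathfrak{D}_{\mathbf{ab}}(U)=|\mathfrak{C}_{\mathbf{ab}}(U)|^2$, and the $\alpha$-Clifford entropy $H_\alpha(U)=\frac{1}{\alpha-1}\Big(1-\frac{1}{d^2}\sum_{\mathbf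 a,\mathbf b\in\mathbb{Z}_{d_L}^{2n}}\mathfrak{D}_{\mathbf{ab}}(U)^\alpha\Big)$. *)

theory Defs
  imports Complex_Main "Jordan_Normal_Form.Matrix"
begin

definition adj :: "complex mat \<Rightarrow> complex mat" where
  "adj M = mat (dim_col M) (dim_row M) (\<lambda>(i,j). cnj (M $$ (j,i)))"

definition mtrace :: "complex mat \<Rightarrow> complex" where
  "mtrace M = (\<Sum>i<dim_row M. M $$ (i,i))"

definition unitary_mat :: "nat \<Rightarrow> complex mat \<Rightarrow> bool" where
  "unitary_mat m U \<longleftrightarrow> U \<in> carrier_mat m m \<and> U * adj U = 1\<^sub>m m \<and> adj U * U = 1\<^sub>m m"

(* Kronecker (tensor) product; the first factor is the most significant digit *)
definition kron :: "complex mat \<Rightarrow> complex mat \<Rightarrow> complex mat" where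
  "kron A B = mat (dim_row A * dim_row B) (dim_col A * dim_col B)
     (\<lambda>(i,j). A $$ (i div dim_row B, j div dim_col B) * B $$ (i mod dim_row B, j mod dim_col B))"

definition omega :: "nat \<Rightarrow> complex" where
  "omega dL = exp (2 * pi * \<i> / of_nat dL)"

definition tau :: "nat \<Rightarrow> complex" where
  "tau dL = - exp (pi * \<i> / of_nat dL)"

definition Zop :: "nat \<Rightarrow> complex mat" where
  "Zop dL = mat dL dL (\<lambda>(j,k). if j = k then omega dL ^ k else 0)"

definition Xop :: "nat \<Rightarrow> complex mat" where
  "Xop dL = mat dL dL (\<lambda>(j,k). if j = (k + 1) mod dL then 1 else 0)"

definition D1 :: "nat \<Rightarrow> nat \<times> nat \<Rightarrow> complex mat" where
  "D1 dL a = (tau dL ^ (fst a * snd a)) \<cdot>\<^sub>m ((Xop dL ^\<^sub>m fst a) * (Zop dL ^\<^sub>m snd a))"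

(* a = a_1 (+) ... (+) a_n, represented as the list [a_1,...,a_n] of pairs *)
definition Dop :: "nat \<Rightarrow> (nat \<times> nat) list \<Rightarrow> complex mat" where
  "Dop dL a = foldr (\<lambda>p M. kron (D1 dL p) M) a (1\<^sub>m 1)"

definition pts :: "nat \<Rightarrow> nat \<Rightarrow> (nat \<times> nat) list set" where
  "pts dL n = {a. length a = n \<and> (\<forall>p\<in>set a. fst p < dL \<and> snd p < dL)}"

definition clifford_group :: "nat \<Rightarrow> nat \<Rightarrow> complex mat set" where
  "clifford_group dL n = {C. unitary_mat (dL ^ n) C \<and>
     (\<forall>a\<in>pts dL n. \<exists>s<dL. \<exists>a'\<in>pts dL n.
        C * Dop dL a * adj C = (omega dL ^ s) \<cdot>\<^sub>m Dop dL a')}"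

definition charC :: "nat \<Rightarrow> nat \<Rightarrow> complex mat \<Rightarrow> (nat \<times> nat) list \<Rightarrow> (nat \<times> nat) list \<Rightarrow> complex" where
  "charC dL n U a b = mtrace (adj (Dop dL a) * U * Dop dL b * adj U) / of_nat (dL ^ n)"

definition charD :: "nat \<Rightarrow> nat \<Rightarrow> complex mat \<Rightarrow> (nat \<times> nat) list \<Rightarrow> (nat \<times> nat) list \<Rightarrow> real" where
  "charD dL n U a b = (cmod (charC dL n U a b))\<^sup>2"

definition clifford_entropy :: "nat \<Rightarrow> nat \<Rightarrow> real \<Rightarrow> complex mat \<Rightarrow> real" where
  "clifford_entropy dL n \<alpha> U = 1 / (\<alpha> - 1) *
     (1 - 1 / (real (dL ^ n))\<^sup>2 * (\<Sum>a\<in>pts dL n. \<Sum>b\<in>pts dL n. charD dL n U a b powr \<alpha>))"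

end

theory Submission
  imports Defs "HOL-Number_Theory.Cong"
begin

(* For the Hilbert-Schmidt product the d^2 Weyl operators D_a satisfy the Parseval identity
   sum_a |<D_a, M>|^2 = d ||M||^2 (proved qudit by qudit; for one qudit the sum over the
   Z-exponent is a discrete Fourier transform), and hence are orthogonal with <D_a, D_a> = d.
   For M = U D_b U^dagger, whose Frobenius norm is that of D_b, Parseval says that every column
   b of the characteristic distribution D_ab(U) is a probability vector.  For alpha <> 1 the
   difference x^alpha - x has constant sign on [0,1] and vanishes only at 0 and 1, so H_alpha(U) = 0
   iff all D_ab(U) are 0 or 1.  A 0/1 column means U D_b U^dagger = c D_a for a single a, and
   c^dL = 1 because D_b^dL = D_a^dL = 1: this is exactly the Clifford condition. *)

section \<open>Adjoint, trace and the Hilbert--Schmidt inner product\<close>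

lemma index_mult_mat_sum:
  assumes "A \<in> carrier_mat r k" "B \<in> carrier_mat k c" "i < r" "j < c"
  shows "(A * B) $$ (i,j) = (\<Sum>l<k. A $$ (i,l) * B $$ (l,j))"
  using assms by (auto simp: scalar_prod_def lessThan_atLeast0)

lemma adj_dim [simp]: "dim_row (adj A) = dim_col A" "dim_col (adj A) = dim_row A"
  by (auto simp: adj_def)

lemma index_adj [simp]:
  "i < dim_col A \<Longrightarrow> j < dim_row A \<Longrightarrow> adj A $$ (i,j) = cnj (A $$ (j,i))"
  by (auto simp: adj_def)

lemma adj_carrier: "A \<in> carrier_mat r c \<Longrightarrow> adj A \<in> carrier_mat c r"
  by (auto intro: carrier_matI)

lemma adj_adj [simp]: "adj (adj A) = A"
  by (rule eq_matI) auto

lemma adj_mult: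
  assumes "A \<in> carrier_mat r k" "B \<in> carrier_mat k c"
  shows "adj (A * B) = adj B * adj A"
proof (rule eq_matI)
  fix i j assume "i < dim_row (adj B * adj A)" "j < dim_col (adj B * adj A)"
  then have ij: "i < c" "j < r" using assms by auto
  have "adj (A * B) $$ (i,j) = (\<Sum>l<k. cnj (A $$ (j,l)) * cnj (B $$ (l,i)))"
    using ij assms by (simp add: index_mult_mat_sum[OF assms(1,2) ij(2,1)] cnj_sum)
  also have "\<dots> = (adj B * adj A) $$ (i,j)"
    using ij assms
    by (subst index_mult_mat_sum[OF adj_carrier adj_carrier]) (auto simp: mult.commute)
  finally show "adj (A * B) $$ (i,j) = (adj B * adj A) $$ (i,j)" .
qed (use assms in auto)

lemma mtrace_mult_comm:
  assumes "A \<in> carrier_mat r c" "B \<in> carrier_mat c r"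
  shows "mtrace (A * B) = mtrace (B * A)"
proof -
  have "mtrace (A * B) = (\<Sum>i<r. (A * B) $$ (i,i))"
    unfolding mtrace_def using assms by simp
  also have "\<dots> = (\<Sum>i<r. \<Sum>l<c. A $$ (i,l) * B $$ (l,i))"
    by (rule sum.cong[OF refl], rule index_mult_mat_sum[OF assms]) auto
  also have "\<dots> = (\<Sum>l<c. \<Sum>i<r. B $$ (l,i) * A $$ (i,l))"
    by (subst sum.swap) (simp add: mult.commute)
  also have "\<dots> = (\<Sum>l<c. (B * A) $$ (l,l))"
    by (rule sum.cong[OF refl], rule index_mult_mat_sum[OF assms(2,1), symmetric]) auto
  also have "\<dots> = mtrace (B * A)"
    unfolding mtrace_def using assms by simp
  finally show ?thesis .
qed

definition hs_inner :: "complex mat \<Rightarrow> complex mat \<Rightarrow> complex" where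
  "hs_inner X M = (\<Sum>i<dim_row X. \<Sum>j<dim_col X. cnj (X $$ (i,j)) * M $$ (i,j))"

definition frob_sq :: "complex mat \<Rightarrow> real" where
  "frob_sq M = (\<Sum>i<dim_row M. \<Sum>j<dim_col M. (cmod (M $$ (i,j)))\<^sup>2)"

lemma mtrace_adj_mult:
  assumes "X \<in> carrier_mat r c" "M \<in> carrier_mat r c"
  shows "mtrace (adj X * M) = hs_inner X M"
proof -
  have "mtrace (adj X * M) = (\<Sum>j<c. (adj X * M) $$ (j,j))"
    unfolding mtrace_def using assms by simp
  also have "\<dots> = (\<Sum>j<c. \<Sum>i<r. cnj (X $$ (i,j)) * M $$ (i,j))"
    by (rule sum.cong[OF refl], subst index_mult_mat_sum[OF adj_carrier[OF assms(1)] assms(2)])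
       (use assms in auto)
  also have "\<dots> = hs_inner X M"
    unfolding hs_inner_def using assms by (subst sum.swap) auto
  finally show ?thesis .
qed

lemma cnj_mult_self: "cnj z * z = complex_of_real ((cmod z)\<^sup>2)"
  by (simp add: complex_norm_square mult.commute del: of_real_power)

lemma hs_inner_self: "hs_inner M M = complex_of_real (frob_sq M)"
  unfolding hs_inner_def frob_sq_def of_real_sum by (simp only: cnj_mult_self)

lemma hs_inner_smult_right:
  "dim_row M = dim_row X \<Longrightarrow> dim_col M = dim_col X \<Longrightarrow> hs_inner X (c \<cdot>\<^sub>m M) = c * hs_inner X M"
  unfolding hs_inner_def by (simp add: sum_distrib_left ac_simps)

lemma hs_inner_diff_right:
  assumes "M \<in> carrier_mat r c" "N \<in> carrier_mat r c" "X \<in> carrier_mat r c"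
  shows "hs_inner X (M - N) = hs_inner X M - hs_inner X N"
  unfolding hs_inner_def using assms by (simp add: sum_subtractf right_diff_distrib)

lemma frob_sq_eq_0D:
  assumes "frob_sq M = 0" "i < dim_row M" "j < dim_col M"
  shows "M $$ (i,j) = 0"
proof -
  have "(\<Sum>j<dim_col M. (cmod (M $$ (i,j)))\<^sup>2) = 0"
    using assms(1,2) unfolding frob_sq_def
    by (subst (asm) sum_nonneg_eq_0_iff) (auto intro: sum_nonneg)
  then show ?thesis
    using assms(3) by (subst (asm) sum_nonneg_eq_0_iff) auto
qed

lemma unitary_conj_mult:
  assumes U: "U \<in> carrier_mat d d" and UU: "adj U * U = 1\<^sub>m d"
    and A: "A \<in> carrier_mat d d" and B: "B \<in> carrier_mat d d"
  shows "(U * A * adj U) * (U * B * adj U) = U * (A * B) * adj U"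
proof -
  have V: "adj U \<in> carrier_mat d d" using U by (rule adj_carrier)
  have "(U * A * adj U) * (U * B * adj U) = (U * A) * ((adj U * U) * B) * adj U"
    using U A B V by (simp add: assoc_mult_mat[of _ d d _ d _ d])
  also have "\<dots> = U * (A * B) * adj U"
    using U A B UU by (simp add: assoc_mult_mat[of _ d d _ d _ d])
  finally show ?thesis .
qed

lemma unitary_conj_pow:
  assumes U: "U \<in> carrier_mat d d" and "adj U * U = 1\<^sub>m d" "U * adj U = 1\<^sub>m d"
    and A: "A \<in> carrier_mat d d"
  shows "(U * A * adj U) ^\<^sub>m k = U * (A ^\<^sub>m k) * adj U"
proof (induction k)
  case 0
  show ?case using assms by simp
next
  case (Suc k)
  then show ?case
    using unitary_conj_mult[OF U assms(2) pow_carrier_mat[OF A] A] by simp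
qed

lemma adj_conj:
  assumes U: "U \<in> carrier_mat d d" and A: "A \<in> carrier_mat d d"
  shows "adj (U * A * adj U) = U * adj A * adj U"
proof -
  have "adj (U * A * adj U) = U * (adj A * adj U)"
    using U A
    by (simp add: adj_mult[OF mult_carrier_mat[OF U A] adj_carrier[OF U]] adj_mult[OF U A])
  then show ?thesis
    using assoc_mult_mat[OF U adj_carrier[OF A] adj_carrier[OF U]] by simp
qed

lemma mtrace_unitary_conj:
  assumes U: "U \<in> carrier_mat d d" and "adj U * U = 1\<^sub>m d" and X: "X \<in> carrier_mat d d"
  shows "mtrace (U * X * adj U) = mtrace X"
proof -
  have V: "adj U \<in> carrier_mat d d" using U by (rule adj_carrier)
  have "mtrace ((U * X) * adj U) = mtrace ((adj U * U) * X)"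
    using mtrace_mult_comm[OF mult_carrier_mat[OF U X] V] assoc_mult_mat[OF V U X] by simp
  then show ?thesis using assms by simp
qed

lemma frob_sq_unitary_conj:
  assumes U: "U \<in> carrier_mat d d" and UU: "adj U * U = 1\<^sub>m d" and A: "A \<in> carrier_mat d d"
  shows "frob_sq (U * A * adj U) = frob_sq A"
proof -
  have UAU: "U * A * adj U \<in> carrier_mat d d" using U A by (auto intro: adj_carrier)
  have "complex_of_real (frob_sq (U * A * adj U)) = mtrace (adj (U * A * adj U) * (U * A * adj U))"
    by (simp add: hs_inner_self mtrace_adj_mult[OF UAU UAU])
  also have "\<dots> = mtrace (U * (adj A * A) * adj U)"
    by (simp only: adj_conj[OF U A] unitary_conj_mult[OF U UU adj_carrier[OF A] A])
  also have "\<dots> = complex_of_real (frob_sq A)"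
    using assms adj_carrier[OF A]
    by (simp add: mtrace_unitary_conj mtrace_adj_mult[OF A A] hs_inner_self)
  finally show ?thesis by (simp only: of_real_eq_iff)
qed

section \<open>Kronecker products\<close>

lemma sum_lessThan_mult:
  fixes f :: "nat \<Rightarrow> 'a::comm_monoid_add"
  shows "(\<Sum>k<m * n. f k) = (\<Sum>i<m. \<Sum>j<n. f (i * n + j))"
proof -
  have "(\<Sum>k<m * n. f k) = (\<Sum>i<m. sum f {i * n..<i * n + n})"
    by (rule sum.nat_group[symmetric])
  also have "\<dots> = (\<Sum>i<m. \<Sum>j<n. f (i * n + j))"
  proof (rule sum.cong[OF refl])
    fix i
    show "sum f {i * n..<i * n + n} = (\<Sum>j<n. f (i * n + j))"
      using sum.shift_bounds_nat_ivl[of f 0 "i * n" n] by (simp add: atLeast0LessThan add.commute)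
  qed
  finally show ?thesis .
qed

lemma sum_swap_outer_pairs:
  "(\<Sum>i\<in>A. \<Sum>k\<in>B. \<Sum>j\<in>C. \<Sum>l\<in>D. f i k j l) = (\<Sum>k\<in>B. \<Sum>l\<in>D. \<Sum>i\<in>A. \<Sum>j\<in>C. f i k j l)"
proof -
  have "(\<Sum>i\<in>A. \<Sum>k\<in>B. \<Sum>j\<in>C. \<Sum>l\<in>D. f i k j l) = (\<Sum>k\<in>B. \<Sum>i\<in>A. \<Sum>j\<in>C. \<Sum>l\<in>D. f i k j l)"
    by (rule sum.swap)
  also have "\<dots> = (\<Sum>k\<in>B. \<Sum>i\<in>A. \<Sum>l\<in>D. \<Sum>j\<in>C. f i k j l)"
    by (rule sum.cong[OF refl], rule sum.cong[OF refl], rule sum.swap)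
  also have "\<dots> = (\<Sum>k\<in>B. \<Sum>l\<in>D. \<Sum>i\<in>A. \<Sum>j\<in>C. f i k j l)"
    by (rule sum.cong[OF refl], rule sum.swap)
  finally show ?thesis .
qed

lemma kron_dim [simp]:
  "dim_row (kron A B) = dim_row A * dim_row B" "dim_col (kron A B) = dim_col A * dim_col B"
  by (auto simp: kron_def)

lemma kron_carrier:
  "A \<in> carrier_mat ra ca \<Longrightarrow> B \<in> carrier_mat rb cb \<Longrightarrow> kron A B \<in> carrier_mat (ra * rb) (ca * cb)"
  by (auto intro: carrier_matI)

lemma index_kron:
  "i < dim_row A * dim_row B \<Longrightarrow> j < dim_col A * dim_col B \<Longrightarrow>
   kron A B $$ (i,j) =
     A $$ (i div dim_row B, j div dim_col B) * B $$ (i mod dim_row B, j mod dim_col B)"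
  by (auto simp: kron_def)

lemma block_index_less: "i < (m::nat) \<Longrightarrow> k < n \<Longrightarrow> i * n + k < m * n"
proof -
  assume "i < m" "k < n"
  then have "i * n + n \<le> m * n" using mult_le_mono1[of "Suc i" m n] by simp
  then show ?thesis using \<open>k < n\<close> by linarith
qed

lemma index_kron_blocks:
  "i < dim_row A \<Longrightarrow> k < dim_row B \<Longrightarrow> j < dim_col A \<Longrightarrow> l < dim_col B \<Longrightarrow>
   kron A B $$ (i * dim_row B + k, j * dim_col B + l) = A $$ (i,j) * B $$ (k,l)"
  by (simp add: index_kron block_index_less)

lemma kron_mult:
  assumes A: "A \<in> carrier_mat ra ka" and C: "C \<in> carrier_mat ka ca"
    and B: "B \<in> carrier_mat rb kb" and D: "D \<in> carrier_mat kb cb"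
  shows "kron A B * kron C D = kron (A * C) (B * D)"
proof (rule eq_matI)
  fix i j assume "i < dim_row (kron (A * C) (B * D))" "j < dim_col (kron (A * C) (B * D))"
  then have ij: "i < ra * rb" "j < ca * cb" using assms by auto
  then have "rb > 0" "cb > 0" by (auto intro: Nat.gr0I)
  then have i: "i div rb < ra" "i mod rb < rb" and j: "j div cb < ca" "j mod cb < cb"
    using ij by (auto simp: less_mult_imp_div_less)
  have "(kron A B * kron C D) $$ (i,j) =
      (\<Sum>l<ka. \<Sum>m<kb. kron A B $$ (i, l * kb + m) * kron C D $$ (l * kb + m, j))"
    by (simp only: index_mult_mat_sum[OF kron_carrier[OF A B] kron_carrier[OF C D] ij]
        sum_lessThan_mult)
  also have "\<dots> = (\<Sum>l<ka. \<Sum>m<kb. (A $$ (i div rb, l) * C $$ (l, j div cb)) *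
      (B $$ (i mod rb, m) * D $$ (m, j mod cb)))"
    using assms ij by (intro sum.cong refl) (simp add: index_kron block_index_less)
  also have "\<dots> = (A * C) $$ (i div rb, j div cb) * (B * D) $$ (i mod rb, j mod cb)"
    by (simp only: index_mult_mat_sum[OF A C i(1) j(1)] index_mult_mat_sum[OF B D i(2) j(2)]
        sum_product)
  also have "\<dots> = kron (A * C) (B * D) $$ (i,j)"
    using assms ij by (simp add: index_kron)
  finally show "(kron A B * kron C D) $$ (i,j) = kron (A * C) (B * D) $$ (i,j)" .
qed (use assms in auto)

lemma kron_one: "n > 0 \<Longrightarrow> kron (1\<^sub>m m) (1\<^sub>m n) = (1\<^sub>m (m * n) :: complex mat)"
  by (rule eq_matI) (auto simp: index_kron less_mult_imp_div_less, metis div_mult_mod_eq)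

lemma kron_pow:
  assumes A: "A \<in> carrier_mat r r" and B: "B \<in> carrier_mat s s" and "s > 0"
  shows "kron A B ^\<^sub>m k = kron (A ^\<^sub>m k) (B ^\<^sub>m k)"
proof (induction k)
  case 0
  show ?case using assms by (simp add: kron_one)
next
  case (Suc k)
  then show ?case
    using kron_mult[OF pow_carrier_mat[OF A] A pow_carrier_mat[OF B] B] by simp
qed

lemma frob_sq_kron: "frob_sq (kron A B) = frob_sq A * frob_sq B"
proof -
  have "frob_sq (kron A B) = (\<Sum>i<dim_row A. \<Sum>k<dim_row B. \<Sum>j<dim_col A. \<Sum>l<dim_col B.
      (cmod (A $$ (i,j)))\<^sup>2 * (cmod (B $$ (k,l)))\<^sup>2)"
    unfolding frob_sq_def kron_dim sum_lessThan_mult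
    by (intro sum.cong refl) (simp add: index_kron_blocks norm_mult power_mult_distrib)
  also have "\<dots> = frob_sq A * frob_sq B"
    unfolding frob_sq_def sum_product by (intro sum.cong refl sum.swap)
  finally show ?thesis .
qed

definition partial_inner :: "complex mat \<Rightarrow> nat \<Rightarrow> nat \<Rightarrow> complex mat \<Rightarrow> complex mat" where
  "partial_inner A r c M = mat r c (\<lambda>(k,l).
     \<Sum>i<dim_row A. \<Sum>j<dim_col A. cnj (A $$ (i,j)) * M $$ (i * r + k, j * c + l))"

lemma hs_inner_kron:
  assumes B: "B \<in> carrier_mat r c"
  shows "hs_inner (kron A B) M = hs_inner B (partial_inner A r c M)"
proof -
  have dims: "dim_row B = r" "dim_col B = c" using B by auto
  have kron_AB: "kron A B $$ (i * r + k, j * c + l) = A $$ (i,j) * B $$ (k,l)"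
    if "i < dim_row A" "k < r" "j < dim_col A" "l < c" for i j k l
    using index_kron_blocks[of i A k B j l] that B by auto
  have "hs_inner (kron A B) M = (\<Sum>i<dim_row A. \<Sum>k<r. \<Sum>j<dim_col A. \<Sum>l<c.
      cnj (B $$ (k,l)) * (cnj (A $$ (i,j)) * M $$ (i * r + k, j * c + l)))"
    unfolding hs_inner_def kron_dim dims sum_lessThan_mult
    by (intro sum.cong refl) (simp add: kron_AB)
  also have "\<dots> = (\<Sum>k<r. \<Sum>l<c. \<Sum>i<dim_row A. \<Sum>j<dim_col A.
      cnj (B $$ (k,l)) * (cnj (A $$ (i,j)) * M $$ (i * r + k, j * c + l)))"
    by (rule sum_swap_outer_pairs)
  also have "\<dots> = hs_inner B (partial_inner A r c M)"
    unfolding hs_inner_def partial_inner_def dims by (simp add: sum_distrib_left)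
  finally show ?thesis .
qed

section \<open>Roots of unity and the discrete Fourier transform\<close>

lemma omega_pow: "omega dL ^ k = cis (2 * pi * real k / real dL)"
proof -
  have "omega dL = cis (2 * pi / real dL)"
    by (simp add: omega_def cis_conv_exp mult.commute)
  then show ?thesis by (simp add: DeMoivre ac_simps)
qed

lemma cmod_omega [simp]: "cmod (omega dL) = 1"
  using omega_pow[of dL 1] by simp

lemma omega_pow_self: "dL > 0 \<Longrightarrow> omega dL ^ dL = 1"
  by (simp add: omega_pow)

lemma omega_pow_cong:
  assumes "dL > 0" "k mod dL = l mod dL"
  shows "omega dL ^ k = omega dL ^ l"
proof -
  have "omega dL ^ k = (omega dL ^ dL) ^ (k div dL) * omega dL ^ (k mod dL)" for k
    by (metis div_mult_mod_eq power_add power_mult mult.commute)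
  then have "omega dL ^ k = omega dL ^ (k mod dL)" for k
    using omega_pow_self[OF assms(1)] by simp
  then show ?thesis using assms(2) by metis
qed

lemma inj_on_omega_pow: "dL > 0 \<Longrightarrow> inj_on (\<lambda>k. omega dL ^ k) {..<dL}"
  using bij_betw_roots_unity[of dL] by (simp add: bij_betw_def omega_pow)

lemma root_of_unity_eq_omega_pow:
  assumes "dL > 0" "c ^ dL = 1"
  shows "\<exists>s<dL. c = omega dL ^ s"
  using bij_betw_roots_unity[OF assms(1)] assms(2) by (auto simp: bij_betw_def omega_pow)

lemma sum_omega_pow_orthogonal:
  assumes "dL > 0" "j < dL" "k < dL"
  shows "(\<Sum>b<dL. cnj (omega dL ^ (b * j)) * omega dL ^ (b * k)) = (if j = k then of_nat dL else 0)"
proof -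
  define z where "z = cnj (omega dL ^ j) * omega dL ^ k"
  have terms: "cnj (omega dL ^ (b * j)) * omega dL ^ (b * k) = z ^ b" for b
    by (simp add: z_def power_mult_distrib mult.commute[of b] power_mult)
  have "z ^ dL = 1"
    using terms[of dL] omega_pow_self[OF assms(1)] by (simp add: power_mult)
  have unit: "cnj (omega dL ^ j) * omega dL ^ j = 1"
    by (simp only: cnj_mult_self norm_power cmod_omega) simp
  have "z = 1 \<longleftrightarrow> omega dL ^ k = omega dL ^ j"
    using unit unfolding z_def by (metis mult.assoc mult.commute mult_1_right)
  also have "\<dots> \<longleftrightarrow> j = k"
    using inj_onD[OF inj_on_omega_pow[OF assms(1)]] assms by auto
  finally show ?thesis
    using \<open>z ^ dL = 1\<close> by (simp only: terms) (simp add: sum_gp_strict)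
qed

lemma dft_parseval:
  assumes "dL > 0"
  shows "(\<Sum>b<dL. (cmod (\<Sum>j<dL. cnj (omega dL ^ (b * j)) * y j))\<^sup>2) =
    real dL * (\<Sum>j<dL. (cmod (y j))\<^sup>2)"
proof -
  define S where "S b = (\<Sum>j<dL. cnj (omega dL ^ (b * j)) * y j)" for b
  have "complex_of_real (\<Sum>b<dL. (cmod (S b))\<^sup>2) = (\<Sum>b<dL. cnj (S b) * S b)"
    by (simp only: of_real_sum cnj_mult_self)
  also have "\<dots> = (\<Sum>b<dL. \<Sum>j<dL. \<Sum>k<dL.
      cnj (y j) * y k * (cnj (omega dL ^ (b * k)) * omega dL ^ (b * j)))"
    unfolding S_def cnj_sum sum_product complex_cnj_mult complex_cnj_cnj
    by (intro sum.cong refl) (simp only: ac_simps)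
  also have "\<dots> = (\<Sum>j<dL. \<Sum>k<dL. cnj (y j) * y k *
      (\<Sum>b<dL. cnj (omega dL ^ (b * k)) * omega dL ^ (b * j)))"
    by (subst sum.swap, subst sum.swap) (simp add: sum_distrib_left)
  also have "\<dots> = (\<Sum>j<dL. \<Sum>k<dL. cnj (y j) * y k * (if k = j then of_nat dL else 0))"
    by (intro sum.cong refl arg_cong2[where f = "(*)"] sum_omega_pow_orthogonal[OF assms]) auto
  also have "\<dots> = (\<Sum>j<dL. cnj (y j) * y j * of_nat dL)"
    by (simp add: if_distrib sum.delta cong: if_cong)
  also have "\<dots> = complex_of_real (real dL * (\<Sum>j<dL. (cmod (y j))\<^sup>2))"
    unfolding cnj_mult_self by (simp add: sum_distrib_left mult.commute del: of_real_power)
  finally show ?thesis by (simp only: of_real_eq_iff S_def)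
qed

section \<open>Weyl operators of a single qudit\<close>

lemma Xop_carrier [simp]: "Xop dL \<in> carrier_mat dL dL"
  by (simp add: Xop_def)

lemma Zop_carrier [simp]: "Zop dL \<in> carrier_mat dL dL"
  by (simp add: Zop_def)

lemma tau_eq_cis: "tau dL = - cis (pi / real dL)"
  by (simp add: tau_def cis_conv_exp mult.commute)

lemma cmod_tau [simp]: "cmod (tau dL) = 1"
  by (simp add: tau_eq_cis)

lemma sum_mult_delta:
  fixes f :: "nat \<Rightarrow> 'a::semiring_0"
  shows "c < n \<Longrightarrow> (\<Sum>l<n. f l * (if l = c then g else 0)) = f c * g"
  by (simp add: if_distrib sum.delta cong: if_cong)

lemma index_Xop_pow:
  "i < dL \<Longrightarrow> j < dL \<Longrightarrow> (Xop dL ^\<^sub>m a) $$ (i,j) = (if i = (j + a) mod dL then 1 else 0)"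
proof (induction a arbitrary: i j)
  case 0
  then show ?case by (simp add: Xop_def)
next
  case (Suc a)
  have "(Xop dL ^\<^sub>m Suc a) $$ (i,j) =
      (\<Sum>l<dL. (Xop dL ^\<^sub>m a) $$ (i,l) * (if l = (j + 1) mod dL then 1 else 0))"
    using Suc.prems unfolding pow_mat.simps(2)
    by (subst index_mult_mat_sum[OF pow_carrier_mat[OF Xop_carrier] Xop_carrier])
       (simp_all add: Xop_def)
  also have "\<dots> = (Xop dL ^\<^sub>m a) $$ (i, (j + 1) mod dL)"
    using Suc.prems by (simp add: sum_mult_delta)
  finally show ?case
    using Suc by (simp add: mod_add_left_eq)
qed

lemma index_Zop_pow:
  "i < dL \<Longrightarrow> j < dL \<Longrightarrow> (Zop dL ^\<^sub>m b) $$ (i,j) = (if i = j then omega dL ^ (b * j) else 0)"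
proof (induction b arbitrary: i j)
  case 0
  then show ?case by (simp add: Zop_def)
next
  case (Suc b)
  have "(Zop dL ^\<^sub>m Suc b) $$ (i,j) =
      (\<Sum>l<dL. (Zop dL ^\<^sub>m b) $$ (i,l) * (if l = j then omega dL ^ j else 0))"
    using Suc.prems unfolding pow_mat.simps(2)
    by (subst index_mult_mat_sum[OF pow_carrier_mat[OF Zop_carrier] Zop_carrier])
       (simp_all add: Zop_def)
  then show ?case
    using Suc by (simp add: sum_mult_delta power_add)
qed

lemma D1_carrier [simp]: "D1 dL p \<in> carrier_mat dL dL"
  unfolding D1_def by (rule smult_carrier_mat, rule mult_carrier_mat) (rule pow_carrier_mat, simp)+

lemma D1_dim [simp]: "dim_row (D1 dL p) = dL" "dim_col (D1 dL p) = dL"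
  using D1_carrier by blast+

lemma index_D1:
  assumes "i < dL" "j < dL"
  shows "D1 dL (a,b) $$ (i,j) =
    (if i = (j + a) mod dL then tau dL ^ (a * b) * omega dL ^ (b * j) else 0)"
proof -
  have XZ: "Xop dL ^\<^sub>m a * Zop dL ^\<^sub>m b \<in> carrier_mat dL dL"
    by (rule mult_carrier_mat) (rule pow_carrier_mat, simp)+
  have "D1 dL (a,b) $$ (i,j) = tau dL ^ (a * b) * (Xop dL ^\<^sub>m a * Zop dL ^\<^sub>m b) $$ (i,j)"
    unfolding D1_def fst_conv snd_conv using assms XZ by (intro index_smult_mat(1)) auto
  also have "(Xop dL ^\<^sub>m a * Zop dL ^\<^sub>m b) $$ (i,j) =
      (if i = (j + a) mod dL then omega dL ^ (b * j) else 0)"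
    using assms
    by (subst index_mult_mat_sum[OF pow_carrier_mat[OF Xop_carrier]
          pow_carrier_mat[OF Zop_carrier]])
       (simp_all add: index_Xop_pow index_Zop_pow sum_mult_delta)
  finally show ?thesis by simp
qed

lemma frob_sq_D1:
  assumes "dL > 0"
  shows "frob_sq (D1 dL p) = real dL"
proof -
  obtain a b where p: "p = (a,b)" by (cases p)
  have "frob_sq (D1 dL p) = (\<Sum>i<dL. \<Sum>j<dL. if i = (j + a) mod dL then 1 else 0)"
    unfolding frob_sq_def D1_dim p
    by (intro sum.cong refl) (simp add: index_D1 norm_mult norm_power)
  also have "\<dots> = (\<Sum>j<dL. \<Sum>i<dL. if i = (j + a) mod dL then 1 else 0)"
    by (rule sum.swap)
  finally show ?thesis using assms by simp
qed

lemma index_D1_pow: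
  assumes "dL > 0" "i < dL" "j < dL"
  shows "(D1 dL (a,b) ^\<^sub>m m) $$ (i,j) = (if i = (j + m * a) mod dL
     then tau dL ^ (m * (a * b)) * omega dL ^ (b * (m * j + a * (\<Sum>k<m. k))) else 0)"
  using assms(2,3)
proof (induction m arbitrary: i j)
  case 0
  then show ?case by simp
next
  case (Suc m)
  define c where "c = (j + a) mod dL"
  have "c < dL" using assms(1) by (simp add: c_def)
  have "(D1 dL (a,b) ^\<^sub>m Suc m) $$ (i,j) =
      (D1 dL (a,b) ^\<^sub>m m) $$ (i,c) * (tau dL ^ (a * b) * omega dL ^ (b * j))"
    using Suc.prems \<open>c < dL\<close> unfolding pow_mat.simps(2)
    by (subst index_mult_mat_sum[OF pow_carrier_mat[OF D1_carrier] D1_carrier])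
       (simp_all add: index_D1 c_def sum_mult_delta)
  moreover have "(c + m * a) mod dL = (j + Suc m * a) mod dL"
    by (simp add: c_def mod_add_left_eq add.assoc)
  moreover have "omega dL ^ (b * (m * c + a * (\<Sum>k<m. k))) * omega dL ^ (b * j) =
      omega dL ^ (b * (Suc m * j + a * (\<Sum>k<Suc m. k)))"
  proof -
    have "(b * (m * c + a * (\<Sum>k<m. k)) + b * j) mod dL =
        (b * (m * (j + a) + a * (\<Sum>k<m. k)) + b * j) mod dL"
      by (intro mod_add_cong mod_mult_cong refl) (simp add: c_def)
    also have "b * (m * (j + a) + a * (\<Sum>k<m. k)) + b * j =
        b * (Suc m * j + a * (\<Sum>k<Suc m. k))"
      by (simp add: algebra_simps)
    finally show ?thesis
      using omega_pow_cong[OF assms(1)] by (metis power_add)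
  qed
  moreover have "tau dL ^ (Suc m * (a * b)) = tau dL ^ (m * (a * b)) * tau dL ^ (a * b)"
    by (simp add: power_add)
  ultimately show ?case
    using Suc.IH[OF Suc.prems(1) \<open>c < dL\<close>] by (simp add: ac_simps)
qed

lemma double_sum_lessThan_id: "2 * (\<Sum>k<m. k) + m = m * (m::nat)"
  by (induction m) (simp_all add: algebra_simps)

text \<open>The sign in tau = -exp(i pi/dL) is what makes this hold for odd dL too.\<close>

lemma tau_pow_omega_pow_gauss:
  assumes "dL > 0"
  shows "tau dL ^ dL * omega dL ^ (\<Sum>k<dL. k) = 1"
proof -
  define S where "S = real (\<Sum>k<dL. k)"
  have "2 * S = real dL * real dL - real dL"
    unfolding S_def using arg_cong[OF double_sum_lessThan_id[of dL], of real]
    by (simp only: of_nat_add of_nat_mult of_nat_numeral)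
  then have "2 * pi * S = pi * (real dL * real dL - real dL)"
    by (metis mult.assoc mult.commute)
  then have "2 * pi * S / real dL = pi * real dL - pi"
    using assms by (simp add: divide_simps algebra_simps)
  then have "real dL * (pi / real dL) + 2 * pi * S / real dL = real dL * pi"
    using assms by simp
  then have "cis (real dL * (pi / real dL)) * cis (2 * pi * S / real dL) = cis pi ^ dL"
    by (simp only: cis_mult DeMoivre)
  moreover have "tau dL ^ dL = (-1) ^ dL * cis (real dL * (pi / real dL))"
    by (subst tau_eq_cis, subst power_minus) (simp only: DeMoivre)
  moreover have "omega dL ^ (\<Sum>k<dL. k) = cis (2 * pi * S / real dL)"
    by (simp only: omega_pow S_def)
  ultimately have "tau dL ^ dL * omega dL ^ (\<Sum>k<dL. k) = (-1) ^ dL * (-1) ^ dL"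
    by (simp only: mult.assoc cis_pi)
  then show ?thesis
    by (simp flip: power_mult_distrib)
qed

lemma D1_pow_self:
  assumes "dL > 0"
  shows "D1 dL p ^\<^sub>m dL = 1\<^sub>m dL"
proof (rule eq_matI)
  obtain a b where p: "p = (a,b)" by (cases p)
  fix i j assume "i < dim_row (1\<^sub>m dL :: complex mat)" "j < dim_col (1\<^sub>m dL :: complex mat)"
  then have ij: "i < dL" "j < dL" by auto
  let ?S = "\<Sum>k<dL. k"
  have "b * (dL * j + a * ?S) = dL * (b * j) + ?S * (a * b)"
    by (simp add: algebra_simps)
  then have "omega dL ^ (b * (dL * j + a * ?S)) =
      (omega dL ^ dL) ^ (b * j) * (omega dL ^ ?S) ^ (a * b)"
    by (simp only: power_add power_mult[of _ dL] power_mult[of _ ?S])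
  moreover have "tau dL ^ (dL * (a * b)) = (tau dL ^ dL) ^ (a * b)"
    by (simp only: power_mult)
  ultimately have "tau dL ^ (dL * (a * b)) * omega dL ^ (b * (dL * j + a * ?S)) =
      (tau dL ^ dL * omega dL ^ ?S) ^ (a * b) * (omega dL ^ dL) ^ (b * j)"
    by (simp only: power_mult_distrib ac_simps)
  then show "(D1 dL p ^\<^sub>m dL) $$ (i,j) = (1\<^sub>m dL :: complex mat) $$ (i,j)"
    using ij assms by (simp add: p index_D1_pow tau_pow_omega_pow_gauss omega_pow_self)
qed auto

lemma inj_on_add_mod: "inj_on (\<lambda>a. (j + a) mod d) {..<(d::nat)}"
  by (rule inj_onI) (use cong_add_lcancel_nat[of j _ _ d] in \<open>auto simp: cong_def\<close>)

lemma sum_mod_shift: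
  fixes f :: "nat \<Rightarrow> 'a::comm_monoid_add"
  shows "(\<Sum>a<d. f ((j + a) mod d)) = (\<Sum>i<d. f i)"
proof (cases "d = 0")
  case False
  then have "(\<lambda>a. (j + a) mod d) ` {..<d} = {..<d}"
    by (intro endo_inj_surj inj_on_add_mod) auto
  then show ?thesis
    using sum.reindex[OF inj_on_add_mod, of f j d] by (simp add: comp_def)
qed simp

lemma hs_inner_D1:
  assumes "dL > 0"
  shows "hs_inner (D1 dL (a,b)) M =
    cnj (tau dL ^ (a * b)) * (\<Sum>j<dL. cnj (omega dL ^ (b * j)) * M $$ ((j + a) mod dL, j))"
proof -
  have "hs_inner (D1 dL (a,b)) M = (\<Sum>j<dL. \<Sum>i<dL. cnj (D1 dL (a,b) $$ (i,j)) * M $$ (i,j))"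
    unfolding hs_inner_def D1_dim by (rule sum.swap)
  also have "\<dots> = (\<Sum>j<dL. \<Sum>i<dL. if i = (j + a) mod dL
      then cnj (tau dL ^ (a * b)) * (cnj (omega dL ^ (b * j)) * M $$ (i,j)) else 0)"
    by (intro sum.cong refl) (simp add: index_D1)
  also have "\<dots> = (\<Sum>j<dL.
      cnj (tau dL ^ (a * b)) * (cnj (omega dL ^ (b * j)) * M $$ ((j + a) mod dL, j)))"
    using assms by (simp add: sum.delta)
  finally show ?thesis
    by (simp add: sum_distrib_left)
qed

lemma D1_parseval:
  assumes "dL > 0"
  shows "(\<Sum>p\<in>{..<dL} \<times> {..<dL}. (cmod (hs_inner (D1 dL p) M))\<^sup>2) =
    real dL * (\<Sum>i<dL. \<Sum>j<dL. (cmod (M $$ (i,j)))\<^sup>2)"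
proof -
  have "(\<Sum>p\<in>{..<dL} \<times> {..<dL}. (cmod (hs_inner (D1 dL p) M))\<^sup>2) =
      (\<Sum>a<dL. \<Sum>b<dL. (cmod (hs_inner (D1 dL (a,b)) M))\<^sup>2)"
    by (simp add: sum.cartesian_product)
  also have "\<dots> =
      (\<Sum>a<dL. \<Sum>b<dL. (cmod (\<Sum>j<dL. cnj (omega dL ^ (b * j)) * M $$ ((j + a) mod dL, j)))\<^sup>2)"
    by (simp only: hs_inner_D1[OF assms] norm_mult complex_mod_cnj norm_power cmod_tau) simp
  also have "\<dots> = real dL * (\<Sum>a<dL. \<Sum>j<dL. (cmod (M $$ ((j + a) mod dL, j)))\<^sup>2)"
    by (simp only: dft_parseval[OF assms] sum_distrib_left)
  also have "(\<Sum>a<dL. \<Sum>j<dL. (cmod (M $$ ((j + a) mod dL, j)))\<^sup>2) =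
      (\<Sum>j<dL. \<Sum>a<dL. (cmod (M $$ ((j + a) mod dL, j)))\<^sup>2)"
    by (rule sum.swap)
  also have "\<dots> = (\<Sum>j<dL. \<Sum>i<dL. (cmod (M $$ (i,j)))\<^sup>2)"
    by (simp only: sum_mod_shift[where f = "\<lambda>i. (cmod (M $$ (i, _)))\<^sup>2"])
  also have "\<dots> = (\<Sum>i<dL. \<Sum>j<dL. (cmod (M $$ (i,j)))\<^sup>2)"
    by (rule sum.swap)
  finally show ?thesis .
qed

section \<open>Weyl operators of several qudits\<close>

lemma Dop_Nil [simp]: "Dop dL [] = 1\<^sub>m 1"
  by (simp add: Dop_def)

lemma Dop_Cons [simp]: "Dop dL (p # a) = kron (D1 dL p) (Dop dL a)"
  by (simp add: Dop_def)

lemma Dop_carrier: "Dop dL a \<in> carrier_mat (dL ^ length a) (dL ^ length a)"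
  by (induction a) (auto dest: kron_carrier[OF D1_carrier])

lemma Dop_dim [simp]: "dim_row (Dop dL a) = dL ^ length a" "dim_col (Dop dL a) = dL ^ length a"
  using Dop_carrier by blast+

lemma frob_sq_Dop: "dL > 0 \<Longrightarrow> frob_sq (Dop dL a) = real dL ^ length a"
  by (induction a) (simp_all add: frob_sq_kron frob_sq_D1, simp add: frob_sq_def)

lemma one_mat_pow [simp]: "(1\<^sub>m n :: 'a::semiring_1 mat) ^\<^sub>m k = 1\<^sub>m n"
  by (induction k) simp_all

lemma Dop_pow_self:
  assumes "dL > 0"
  shows "Dop dL a ^\<^sub>m dL = 1\<^sub>m (dL ^ length a)"
proof (induction a)
  case Nil
  then show ?case by simp
next
  case (Cons p a)
  then show ?case
    using assms by (simp add: kron_pow[OF D1_carrier Dop_carrier] D1_pow_self kron_one)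
qed

lemma pts_0 [simp]: "pts dL 0 = {[]}"
  by (auto simp: pts_def)

lemma pts_Suc: "pts dL (Suc n) = (\<lambda>(p,a). p # a) ` (({..<dL} \<times> {..<dL}) \<times> pts dL n)"
  by (auto simp: pts_def length_Suc_conv image_iff)

lemma inj_on_Cons_pair: "inj_on (\<lambda>(p,a). p # a) X"
  by (auto simp: inj_on_def)

lemma finite_pts: "finite (pts dL n)"
  by (induction n) (simp_all add: pts_Suc)

lemma card_pts: "card (pts dL n) = dL ^ (2 * n)"
  by (induction n) (simp_all add: pts_Suc card_image[OF inj_on_Cons_pair] card_cartesian_product)

lemma sum_pts_Suc:
  "(\<Sum>a\<in>pts dL (Suc n). f a) = (\<Sum>p\<in>{..<dL} \<times> {..<dL}. \<Sum>a\<in>pts dL n. f (p # a))"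
  unfolding pts_Suc sum.reindex[OF inj_on_Cons_pair]
  by (simp add: sum.cartesian_product case_prod_unfold)

lemma length_pts: "a \<in> pts dL n \<Longrightarrow> length a = n"
  by (simp add: pts_def)

lemma Dop_carrier_pts: "a \<in> pts dL n \<Longrightarrow> Dop dL a \<in> carrier_mat (dL ^ n) (dL ^ n)"
  using Dop_carrier[of dL a] by (simp add: length_pts)

lemma partial_inner_carrier: "partial_inner A r c M \<in> carrier_mat r c"
  by (simp add: partial_inner_def)

lemma partial_inner_dim [simp]:
  "dim_row (partial_inner A r c M) = r" "dim_col (partial_inner A r c M) = c"
  by (simp_all add: partial_inner_def)

lemma index_partial_inner:
  "k < r \<Longrightarrow> l < c \<Longrightarrow> partial_inner A r c M $$ (k,l) =
     hs_inner A (mat (dim_row A) (dim_col A) (\<lambda>(i,j). M $$ (i * r + k, j * c + l)))"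
  by (simp add: partial_inner_def hs_inner_def)

lemma weyl_parseval:
  assumes "dL > 0" "M \<in> carrier_mat (dL ^ n) (dL ^ n)"
  shows "(\<Sum>a\<in>pts dL n. (cmod (hs_inner (Dop dL a) M))\<^sup>2) = real dL ^ n * frob_sq M"
  using assms(2)
proof (induction n arbitrary: M)
  case 0
  then show ?case by (auto simp: hs_inner_def frob_sq_def)
next
  case (Suc n)
  let ?d = "dL ^ n"
  let ?B = "\<lambda>k l. mat dL dL (\<lambda>(i,j). M $$ (i * ?d + k, j * ?d + l))"
  have "(\<Sum>a\<in>pts dL (Suc n). (cmod (hs_inner (Dop dL a) M))\<^sup>2) =
      (\<Sum>p\<in>{..<dL} \<times> {..<dL}. \<Sum>a\<in>pts dL n.
        (cmod (hs_inner (Dop dL a) (partial_inner (D1 dL p) ?d ?d M)))\<^sup>2)"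
    by (simp add: sum_pts_Suc hs_inner_kron[OF Dop_carrier_pts])
  also have "\<dots> = real dL ^ n * (\<Sum>p\<in>{..<dL} \<times> {..<dL}. \<Sum>k<?d. \<Sum>l<?d.
      (cmod (hs_inner (D1 dL p) (?B k l)))\<^sup>2)"
    by (simp add: Suc.IH[OF partial_inner_carrier] sum_distrib_left frob_sq_def index_partial_inner)
  also have "\<dots> = real dL ^ n * (\<Sum>k<?d. \<Sum>l<?d. \<Sum>p\<in>{..<dL} \<times> {..<dL}.
      (cmod (hs_inner (D1 dL p) (?B k l)))\<^sup>2)"
    by (subst sum.swap) (simp only: sum.swap[of _ "{..<dL} \<times> {..<dL}"])
  also have "\<dots> = real dL ^ n * (real dL * (\<Sum>k<?d. \<Sum>l<?d. \<Sum>i<dL. \<Sum>j<dL.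
      (cmod (M $$ (i * ?d + k, j * ?d + l)))\<^sup>2))"
    by (simp add: D1_parseval[OF assms(1)] sum_distrib_left)
  also have "(\<Sum>k<?d. \<Sum>l<?d. \<Sum>i<dL. \<Sum>j<dL. (cmod (M $$ (i * ?d + k, j * ?d + l)))\<^sup>2) = frob_sq M"
  proof -
    have "frob_sq M = (\<Sum>i<dL. \<Sum>k<?d. \<Sum>j<dL. \<Sum>l<?d. (cmod (M $$ (i * ?d + k, j * ?d + l)))\<^sup>2)"
      using Suc.prems by (simp add: frob_sq_def sum_lessThan_mult)
    then show ?thesis by (rule trans[OF sum_swap_outer_pairs[symmetric] sym])
  qed
  finally show ?case by simp
qed

text \<open>Parseval applied to D_b itself: the diagonal term already exhausts the total.\<close>

lemma weyl_orthogonal: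
  assumes "dL > 0" "a \<in> pts dL n" "b \<in> pts dL n"
  shows "hs_inner (Dop dL a) (Dop dL b) = (if a = b then of_nat (dL ^ n) else 0)"
proof -
  let ?x = "\<lambda>c. (cmod (hs_inner (Dop dL c) (Dop dL b)))\<^sup>2"
  have self: "hs_inner (Dop dL b) (Dop dL b) = of_nat (dL ^ n)"
    using assms by (simp add: hs_inner_self frob_sq_Dop length_pts)
  have "(\<Sum>c\<in>pts dL n. ?x c) = ?x b"
    using weyl_parseval[OF assms(1) Dop_carrier_pts[OF assms(3)]] assms
    by (simp add: self frob_sq_Dop length_pts norm_power power2_eq_square)
  then have "(\<Sum>c\<in>pts dL n - {b}. ?x c) = 0"
    using sum.remove[OF finite_pts assms(3), of ?x] by simp
  then have "a \<noteq> b \<Longrightarrow> ?x a = 0"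
    using assms(2) by (simp add: sum_nonneg_eq_0_iff finite_pts)
  then show ?thesis
    using self by auto
qed

lemma weyl_single_component:
  assumes "dL > 0" "M \<in> carrier_mat (dL ^ n) (dL ^ n)" "a0 \<in> pts dL n"
    and vanish: "\<And>a. a \<in> pts dL n \<Longrightarrow> a \<noteq> a0 \<Longrightarrow> hs_inner (Dop dL a) M = 0"
  shows "M = (hs_inner (Dop dL a0) M / of_nat (dL ^ n)) \<cdot>\<^sub>m Dop dL a0"
proof -
  define c where "c = hs_inner (Dop dL a0) M / of_nat (dL ^ n)"
  define N where "N = M - c \<cdot>\<^sub>m Dop dL a0"
  have cD: "c \<cdot>\<^sub>m Dop dL a0 \<in> carrier_mat (dL ^ n) (dL ^ n)"
    using Dop_carrier_pts[OF assms(3)] by simp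
  have N: "N \<in> carrier_mat (dL ^ n) (dL ^ n)"
    unfolding N_def by (rule minus_carrier_mat[OF cD])
  have "hs_inner (Dop dL a) N = 0" if a: "a \<in> pts dL n" for a
  proof -
    have "hs_inner (Dop dL a) N = hs_inner (Dop dL a) M - c * hs_inner (Dop dL a) (Dop dL a0)"
      unfolding N_def using Dop_carrier_pts[OF a] Dop_carrier_pts[OF assms(3)]
      by (simp add: hs_inner_diff_right[OF assms(2) cD Dop_carrier_pts[OF a]] hs_inner_smult_right
          length_pts[OF a] length_pts[OF assms(3)])
    then show ?thesis
      using vanish[OF a] a assms(1,3) by (cases "a = a0") (simp_all add: c_def weyl_orthogonal)
  qed
  then have "frob_sq N = 0"
    using weyl_parseval[OF assms(1) N] assms(1) by simp
  then have "M $$ (i,j) = (c \<cdot>\<^sub>m Dop dL a0) $$ (i,j)" if "i < dL ^ n" "j < dL ^ n" for i j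
    using frob_sq_eq_0D[of N i j] that N cD assms(2) by (simp add: N_def length_pts[OF assms(3)])
  then show ?thesis
    using assms(2) cD unfolding c_def by (intro eq_matI) auto
qed

section \<open>The characteristic distribution of a unitary\<close>

lemma charC_eq_hs_inner:
  assumes U: "unitary_mat (dL ^ n) U" and a: "a \<in> pts dL n" and b: "b \<in> pts dL n"
  shows "charC dL n U a b = hs_inner (Dop dL a) (U * Dop dL b * adj U) / of_nat (dL ^ n)"
proof -
  have Uc: "U \<in> carrier_mat (dL ^ n) (dL ^ n)"
    using U by (simp add: unitary_mat_def)
  note Da = Dop_carrier_pts[OF a] and Db = Dop_carrier_pts[OF b]
  have "adj (Dop dL a) * U * Dop dL b * adj U = adj (Dop dL a) * (U * Dop dL b * adj U)"
    using Uc Da Db adj_carrier[OF Uc] adj_carrier[OF Da]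
    by (simp add: assoc_mult_mat[of _ "dL ^ n" "dL ^ n" _ "dL ^ n" _ "dL ^ n"])
  moreover have "U * Dop dL b * adj U \<in> carrier_mat (dL ^ n) (dL ^ n)"
    using Uc Db adj_carrier[OF Uc] by simp
  ultimately show ?thesis
    unfolding charC_def using mtrace_adj_mult[OF Da] by simp
qed

lemma charD_eq_hs_inner:
  assumes "unitary_mat (dL ^ n) U" "a \<in> pts dL n" "b \<in> pts dL n"
  shows "charD dL n U a b =
    (cmod (hs_inner (Dop dL a) (U * Dop dL b * adj U)))\<^sup>2 / (real (dL ^ n))\<^sup>2"
  using assms by (simp add: charD_def charC_eq_hs_inner norm_divide norm_power power_divide)

lemma charD_column_sum:
  assumes "dL > 0" "unitary_mat (dL ^ n) U" "b \<in> pts dL n"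
  shows "(\<Sum>a\<in>pts dL n. charD dL n U a b) = 1"
proof -
  have Uc: "U \<in> carrier_mat (dL ^ n) (dL ^ n)" and UU: "adj U * U = 1\<^sub>m (dL ^ n)"
    using assms(2) by (simp_all add: unitary_mat_def)
  have M: "U * Dop dL b * adj U \<in> carrier_mat (dL ^ n) (dL ^ n)"
    using Uc Dop_carrier_pts[OF assms(3)] adj_carrier[OF Uc] by simp
  have "(\<Sum>a\<in>pts dL n. (cmod (hs_inner (Dop dL a) (U * Dop dL b * adj U)))\<^sup>2) =
      real (dL ^ n) * real (dL ^ n)"
    using weyl_parseval[OF assms(1) M] frob_sq_unitary_conj[OF Uc UU Dop_carrier_pts[OF assms(3)]]
    by (simp add: frob_sq_Dop[OF assms(1)] length_pts[OF assms(3)])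
  then show ?thesis
    using assms by (simp add: charD_eq_hs_inner sum_divide_distrib[symmetric] power2_eq_square)
qed

lemma charD_le_1:
  assumes "dL > 0" "unitary_mat (dL ^ n) U" "a \<in> pts dL n" "b \<in> pts dL n"
  shows "charD dL n U a b \<le> 1"
proof -
  have "0 \<le> charD dL n U x b" for x
    by (simp add: charD_def)
  then show ?thesis
    using member_le_sum[of a "pts dL n" "\<lambda>a. charD dL n U a b"] charD_column_sum[OF assms(1,2,4)]
      assms(3) finite_pts by simp
qed

lemma sum_charD:
  assumes "dL > 0" "unitary_mat (dL ^ n) U"
  shows "(\<Sum>a\<in>pts dL n. \<Sum>b\<in>pts dL n. charD dL n U a b) = (real (dL ^ n))\<^sup>2"
  by (subst sum.swap) (simp add: charD_column_sum[OF assms] card_pts power_mult mult.commute)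

lemma clifford_entropy_eq_0_iff:
  assumes "dL > 0" "\<alpha> \<noteq> 1"
  shows "clifford_entropy dL n \<alpha> U = 0 \<longleftrightarrow>
    (\<Sum>a\<in>pts dL n. \<Sum>b\<in>pts dL n. charD dL n U a b powr \<alpha>) = (real (dL ^ n))\<^sup>2"
  using assms by (auto simp: clifford_entropy_def field_simps)

lemma powr_eq_self_iff:
  fixes x \<alpha> :: real
  assumes "0 \<le> x" "\<alpha> \<noteq> 1"
  shows "x powr \<alpha> = x \<longleftrightarrow> x = 0 \<or> x = 1"
proof (cases "x = 0 \<or> x = 1")
  case False
  then have "x powr \<alpha> \<noteq> x powr 1"
    using assms powr_inj[of x \<alpha> 1] by auto
  then show ?thesis using False assms by simp
qed auto

text \<open>Since 0 powr \<alpha> = 0 in Isabelle, no sign condition on \<alpha> is needed.\<close>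

lemma sum_powr_eq_sum_iff:
  fixes f :: "'a \<Rightarrow> real"
  assumes "finite A" "\<And>x. x \<in> A \<Longrightarrow> 0 \<le> f x \<and> f x \<le> 1" "\<alpha> \<noteq> 1"
  shows "(\<Sum>x\<in>A. f x powr \<alpha>) = (\<Sum>x\<in>A. f x) \<longleftrightarrow> (\<forall>x\<in>A. f x = 0 \<or> f x = 1)"
proof
  assume sums: "(\<Sum>x\<in>A. f x powr \<alpha>) = (\<Sum>x\<in>A. f x)"
  have "f x powr \<alpha> = f x" if "x \<in> A" for x
  proof (cases "\<alpha> < 1")
    case True
    have "f y powr 1 \<le> f y powr \<alpha>" if "y \<in> A" for y
      using powr_mono'[of \<alpha> 1 "f y"] True assms(2)[OF that] by simp
    then show ?thesis
      using sum_mono_inv[OF sums[symmetric] _ \<open>x \<in> A\<close> assms(1)] assms(2) by auto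
  next
    case False
    have "f y powr \<alpha> \<le> f y powr 1" if "y \<in> A" for y
      using powr_mono'[of 1 \<alpha> "f y"] False assms(2)[OF that] by simp
    then show ?thesis
      using sum_mono_inv[OF sums _ \<open>x \<in> A\<close> assms(1)] assms(2) by auto
  qed
  then show "\<forall>x\<in>A. f x = 0 \<or> f x = 1"
    using powr_eq_self_iff assms(2,3) by blast
next
  assume "\<forall>x\<in>A. f x = 0 \<or> f x = 1"
  then show "(\<Sum>x\<in>A. f x powr \<alpha>) = (\<Sum>x\<in>A. f x)"
    by (intro sum.cong refl) auto
qed

section \<open>Clifford unitaries\<close>

lemma smult_pow_mat:
  assumes "A \<in> carrier_mat d d"
  shows "((c :: 'a :: comm_ring_1) \<cdot>\<^sub>m A) ^\<^sub>m k = c ^ k \<cdot>\<^sub>m A ^\<^sub>m k"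
proof (induction k)
  case 0
  then show ?case using assms by (auto intro!: eq_matI)
next
  case (Suc k)
  then show ?case
    using assms
    by (simp add: mult_smult_assoc_mat[of _ d d] mult_smult_distrib[of _ d d]) (rule eq_matI, auto)
qed

lemma zero_one_sum_eq_1_unique_support:
  fixes f :: "'a \<Rightarrow> real"
  assumes "finite A" "(\<Sum>x\<in>A. f x) = 1" "\<And>x. x \<in> A \<Longrightarrow> f x = 0 \<or> f x = 1"
  shows "\<exists>x0\<in>A. \<forall>x\<in>A. x \<noteq> x0 \<longrightarrow> f x = 0"
proof -
  have "\<exists>x0\<in>A. f x0 = 1"
  proof (rule ccontr)
    assume "\<not> (\<exists>x0\<in>A. f x0 = 1)"
    then have "\<forall>x\<in>A. f x = 0" using assms(3) by blast
    then show False using assms(2) by simp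
  qed
  then obtain x0 where x0: "x0 \<in> A" "f x0 = 1" by blast
  then have "(\<Sum>x\<in>A - {x0}. f x) = 0"
    using sum.remove[OF assms(1) x0(1), of f] assms(2) by simp
  then have "\<forall>x\<in>A - {x0}. f x = 0"
    using assms by (subst (asm) sum_nonneg_eq_0_iff) force+
  then show ?thesis
    using x0 by blast
qed

lemma charD_zero_one_if_clifford:
  assumes "dL > 0" "U \<in> clifford_group dL n" "a \<in> pts dL n" "b \<in> pts dL n"
  shows "charD dL n U a b = 0 \<or> charD dL n U a b = 1"
proof -
  have U: "unitary_mat (dL ^ n) U"
    using assms(2) by (simp add: clifford_group_def)
  obtain s a' where a': "a' \<in> pts dL n"
    and conj: "U * Dop dL b * adj U = omega dL ^ s \<cdot>\<^sub>m Dop dL a'"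
    using assms(2,4) unfolding clifford_group_def by blast
  have "hs_inner (Dop dL a) (U * Dop dL b * adj U) =
      omega dL ^ s * (if a = a' then of_nat (dL ^ n) else 0)"
    unfolding conj using assms a' by (simp add: hs_inner_smult_right length_pts weyl_orthogonal)
  then show ?thesis
    using assms U by (simp add: charD_eq_hs_inner norm_mult norm_power)
qed

lemma conj_Dop_eq_phase_Dop:
  assumes "dL > 0" "unitary_mat (dL ^ n) U" "b \<in> pts dL n"
    and zero_one: "\<And>a. a \<in> pts dL n \<Longrightarrow> charD dL n U a b = 0 \<or> charD dL n U a b = 1"
  shows "\<exists>s<dL. \<exists>a'\<in>pts dL n. U * Dop dL b * adj U = omega dL ^ s \<cdot>\<^sub>m Dop dL a'"
proof -
  let ?d = "dL ^ n"
  define M where "M = U * Dop dL b * adj U"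
  have Uc: "U \<in> carrier_mat ?d ?d" and UU: "adj U * U = 1\<^sub>m ?d" "U * adj U = 1\<^sub>m ?d"
    using assms(2) by (simp_all add: unitary_mat_def)
  have Mc: "M \<in> carrier_mat ?d ?d"
    unfolding M_def using Uc Dop_carrier_pts[OF assms(3)] adj_carrier[OF Uc] by simp
  obtain a0 where a0: "a0 \<in> pts dL n" and others: "\<forall>a\<in>pts dL n. a \<noteq> a0 \<longrightarrow> charD dL n U a b = 0"
    using zero_one_sum_eq_1_unique_support[OF finite_pts charD_column_sum[OF assms(1-3)] zero_one]
    by blast
  define c where "c = hs_inner (Dop dL a0) M / of_nat ?d"
  have M_eq: "M = c \<cdot>\<^sub>m Dop dL a0"
    unfolding c_def using others assms(1,2,3)
    by (intro weyl_single_component[OF assms(1) Mc a0]) (simp add: M_def charD_eq_hs_inner)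
  have "M ^\<^sub>m dL = 1\<^sub>m ?d"
    unfolding M_def using Uc UU by (simp add: unitary_conj_pow Dop_carrier_pts[OF assms(3)]
        Dop_pow_self[OF assms(1)] length_pts[OF assms(3)])
  moreover have "M ^\<^sub>m dL = c ^ dL \<cdot>\<^sub>m 1\<^sub>m ?d"
    unfolding M_eq using smult_pow_mat[OF Dop_carrier_pts[OF a0]]
    by (simp add: Dop_pow_self[OF assms(1)] length_pts[OF a0])
  ultimately have "(1\<^sub>m ?d :: complex mat) $$ (0,0) = (c ^ dL \<cdot>\<^sub>m 1\<^sub>m ?d) $$ (0,0)"
    by simp
  then have "c ^ dL = 1"
    using assms(1) by simp
  then obtain s where "s < dL" "c = omega dL ^ s"
    using root_of_unity_eq_omega_pow[OF assms(1)] by blast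
  then show ?thesis
    using M_eq a0 unfolding M_def by blast
qed

lemma clifford_group_iff_charD_zero_one:
  assumes "dL > 0" "unitary_mat (dL ^ n) U"
  shows "U \<in> clifford_group dL n \<longleftrightarrow>
    (\<forall>a\<in>pts dL n. \<forall>b\<in>pts dL n. charD dL n U a b = 0 \<or> charD dL n U a b = 1)"
  using charD_zero_one_if_clifford[OF assms(1)] conj_Dop_eq_phase_Dop[OF assms] assms(2)
  unfolding clifford_group_def by blast

theorem theorem1:
  fixes dL n :: nat and \<alpha> :: real and U :: "complex mat"
  assumes "dL \<ge> 2" and "n \<ge> 1" and "\<alpha> > 0" and "\<alpha> \<noteq> 1"
    and "unitary_mat (dL ^ n) U"
  shows "clifford_entropy dL n \<alpha> U = 0 \<longleftrightarrow> U \<in> clifford_group dL n"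
proof -
  have dL: "dL > 0" using assms(1) by simp
  let ?x = "\<lambda>(a,b). charD dL n U a b"
  have "clifford_entropy dL n \<alpha> U = 0 \<longleftrightarrow>
      (\<Sum>p\<in>pts dL n \<times> pts dL n. ?x p powr \<alpha>) = (\<Sum>p\<in>pts dL n \<times> pts dL n. ?x p)"
    using clifford_entropy_eq_0_iff[OF dL assms(4)] sum_charD[OF dL assms(5)]
    by (simp add: sum.cartesian_product case_prod_unfold)
  also have "\<dots> \<longleftrightarrow> (\<forall>p\<in>pts dL n \<times> pts dL n. ?x p = 0 \<or> ?x p = 1)"
    using charD_le_1[OF dL assms(5)]
    by (intro sum_powr_eq_sum_iff) (auto simp: finite_pts charD_def assms(4))
  also have "\<dots> \<longleftrightarrow> U \<in> clifford_group dL n"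
    using clifford_group_iff_charD_zero_one[OF dL assms(5)] by auto
  finally show ?thesis .
qed

end
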